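(* Let $Q:\mathcal{Z}\times\Theta\to\mathbb{R}$ be any measurable function such that $A(\theta)=EQ(Z,\theta)$ exists for all $\theta\in\Theta$ and $A(e_1),\dots,A(e_M)$ are finite, and let $\beta>0$. Let $\hat\theta_n$ be the mirror averaging aggregate with parameter $\beta$. Then for all $M\ge 2$, $n\ge 1$, $$E_{n-1}A(\hat\theta_n)\le \min_{1\le j\le M}A(e_j)+\frac{\beta\log M}{n}+S_1,$$ where $$S_1=\beta\,E_n\log\Big(\sum_{j=1}^M\hat\theta_n^{(j)}\exp\Big[-\frac{Q(Z_n,e_j)-Q(Z_n,\hat\theta_n)}{\beta}\Big]\Big).$$
   Context: $(\mathcal{Z},\mathfrak{F})$ is a measurable space, $M\ge2$, $\Theta=\{\theta\in\mathbb{R}^M:\sum_j\theta^{(j)}=1,\theta^{(j)}\ge0\}$, $e_j$ is the $j$th unit vector of $\mathbb{R}^M$, and $z^{(j)}$ denotes the $j$th component of $z\in\mathbb{R}^M$. $Z$ is a $\mathcal{Z}$-valued random variable with distribution $P$ and expectation $E$; $Z_1,\dots,Z_n$ are i.i.d. copies of $Z$. $E_n$ (resp. $E_{n-1}$) denotes expectation with respect to $(Z_1,\dots,Z_n)$ (resp. $(Z_1,\dots,Z_{n-1})$). Mirror averaging aggregate with parameter $\beta>0$: define $W_\beta(\zeta)=\beta\log\big(\frac1M\sum_{j=1}^Me^{-\zeta^{(j)}/\beta}\big)$ for $\zeta\in\mathbb{R}^M$; put $\zeta_0=0\in\mathbb{R}^M$ and, for $i=1,\dots,n-1$, $\zeta_i=\zeta_{i-1}+u_i$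 where $u_i=(Q(Z_i,e_1),\dots,Q(Z_i,e_M))^\top$; for $i=0,\dots,n-1$ let $\theta_i=-\nabla W_\beta(\zeta_i)$, i.e. $\theta_i^{(j)}=e^{-\zeta_i^{(j)}/\beta}/\sum_{k=1}^Me^{-\zeta_i^{(k)}/\beta}$ (so $\theta_0=(1/M,\dots,1/M)$); and set $\hat\theta_n=\frac1n\sum_{i=1}^n\theta_{i-1}$, which is a function of $Z_1,\dots,Z_{n-1}$. *)

theory Defs
  imports "HOL-Probability.Probability"
begin

unbundle vec_syntax

definition prob_simplex :: "(real^'m) set" where
  "prob_simplex = {\<theta>. (\<forall>j. 0 \<le> \<theta> $ j) \<and> (\<Sum>j\<in>UNIV. \<theta> $ j) = 1}"

definition eexp :: "'a measure \<Rightarrow> ('a \<Rightarrow> ereal) \<Rightarrow> ereal" where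
  "eexp M f = enn2ereal (\<integral>\<^sup>+ x. e2ennreal (f x) \<partial>M) - enn2ereal (\<integral>\<^sup>+ x. e2ennreal (- f x) \<partial>M)"

definition eexp_exists :: "'a measure \<Rightarrow> ('a \<Rightarrow> ereal) \<Rightarrow> bool" where
  "eexp_exists M f \<longleftrightarrow> (\<integral>\<^sup>+ x. e2ennreal (f x) \<partial>M) < \<infinity> \<or> (\<integral>\<^sup>+ x. e2ennreal (- f x) \<partial>M) < \<infinity>"

definition risk :: "'z measure \<Rightarrow> ('z \<Rightarrow> real^'m \<Rightarrow> real) \<Rightarrow> real^'m \<Rightarrow> ereal" where
  "risk P Q \<theta> = eexp P (\<lambda>z. ereal (Q z \<theta>))"

text \<open>zeta_i = sum_{k=1}^i u_k with u_k = (Q(Z_k,e_1),...,Q(Z_k,e_M)); the sample is omega.\<close>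
definition zeta :: "('z \<Rightarrow> real^'m \<Rightarrow> real) \<Rightarrow> (nat \<Rightarrow> 'z) \<Rightarrow> nat \<Rightarrow> real^'m" where
  "zeta Q \<omega> i = (\<chi> j. \<Sum>k\<in>{1..i}. Q (\<omega> k) (axis j 1))"

text \<open>theta_i = - grad W_beta(zeta_i).\<close>
definition theta_md :: "real \<Rightarrow> ('z \<Rightarrow> real^'m \<Rightarrow> real) \<Rightarrow> (nat \<Rightarrow> 'z) \<Rightarrow> nat \<Rightarrow> real^'m" where
  "theta_md \<beta> Q \<omega> i =
     (\<chi> j. exp (- (zeta Q \<omega> i $ j) / \<beta>) / (\<Sum>k\<in>UNIV. exp (- (zeta Q \<omega> i $ k) / \<beta>)))"

definition mirror_avg :: "real \<Rightarrow> ('z \<Rightarrow> real^'m \<Rightarrow> real) \<Rightarrow> nat \<Rightarrow> (nat \<Rightarrow> 'z) \<Rightarrow> real^'m" where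
  "mirror_avg \<beta> Q n \<omega> = (1 / real n) *\<^sub>R (\<Sum>i\<in>{1..n}. theta_md \<beta> Q \<omega> (i - 1))"

end

theory Submission
  imports Defs
begin

text \<open>
  The aggregate \<open>\<theta> = (\<theta>\<^sub>0 + \<dots> + \<theta>\<^sub>n\<^sub>-\<^sub>1) / n\<close> depends only on
  \<open>Z\<^sub>1, \<dots>, Z\<^sub>n\<^sub>-\<^sub>1\<close>, so by Tonelli's theorem \<open>E\<^sub>n\<^sub>-\<^sub>1 A(\<theta>) \<le> E\<^sub>n Q(Z\<^sub>n, \<theta>)\<close>.
  Pointwise \<open>Q(Z\<^sub>n, \<theta>) = L + \<beta> S\<close>, where \<open>S\<close> is the integrand of \<open>S\<^sub>1\<close> and
  \<open>L = -\<beta> log \<Sum>\<^sub>j \<theta>\<^sup>(\<^sup>j\<^sup>) exp(-Q(Z\<^sub>n, e\<^sub>j) / \<beta>)\<close> is the mix loss of the weights \<open>\<theta>\<close>.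
  The mix loss is convex in the weights, so \<open>L\<close> is at most the average over \<open>i\<close> of the
  mix losses of \<open>\<theta>\<^sub>i\<^sub>-\<^sub>1\<close> at \<open>Z\<^sub>n\<close>. By exchangeability \<open>Z\<^sub>n\<close> may be replaced by
  \<open>Z\<^sub>i\<close> in the \<open>i\<close>-th term, and then the mix losses telescope to
  \<open>-W\<^sub>\<beta>(\<zeta>\<^sub>n) \<le> \<zeta>\<^sub>n\<^sup>(\<^sup>j\<^sup>) + \<beta> log M\<close>, whose expectation is \<open>n A(e\<^sub>j) + \<beta> log M\<close>.
\<close>

section \<open>The probability simplex and the mix loss\<close>

lemma axis_in_prob_simplex: "axis j 1 \<in> prob_simplex"
  by (auto simp: prob_simplex_def axis_def)

lemma mean_in_prob_simplex:
  assumes "finite A" "A \<noteq> {}" "\<And>i. i \<in> A \<Longrightarrow> w i \<in> prob_simplex"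
  shows "(1 / real (card A)) *\<^sub>R (\<Sum>i\<in>A. w i) \<in> prob_simplex"
proof -
  have "(\<Sum>j\<in>UNIV. \<Sum>i\<in>A. w i $ j) = (\<Sum>i\<in>A. \<Sum>j\<in>UNIV. w i $ j)"
    by (rule sum.swap)
  also have "\<dots> = real (card A)"
    using assms(3) by (simp add: prob_simplex_def)
  finally have total: "(\<Sum>j\<in>UNIV. (\<Sum>i\<in>A. w i $ j) / real (card A)) = 1"
    using assms(1,2) by (simp add: sum_divide_distrib[symmetric])
  have nonneg: "0 \<le> (\<Sum>i\<in>A. w i $ j) / real (card A)" for j
    using assms(3) by (intro divide_nonneg_nonneg sum_nonneg) (auto simp: prob_simplex_def)
  have "((1 / real (card A)) *\<^sub>R (\<Sum>i\<in>A. w i)) $ j = (\<Sum>i\<in>A. w i $ j) / real (card A)" for j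
    unfolding vector_scaleR_component sum_component by simp
  then show ?thesis
    unfolding prob_simplex_def mem_Collect_eq using nonneg total by presburger
qed

lemma prob_simplex_weighted_sum_pos:
  assumes "w \<in> prob_simplex" "\<And>j. 0 < e j"
  shows "0 < (\<Sum>j\<in>UNIV. w $ j * e j)"
proof -
  have nonneg: "\<And>j. 0 \<le> w $ j" and total: "(\<Sum>j\<in>UNIV. w $ j) = 1"
    using assms(1) by (auto simp: prob_simplex_def)
  obtain j where "0 < w $ j"
  proof (rule ccontr)
    assume "\<not> thesis"
    then have "(\<Sum>j\<in>UNIV. w $ j) \<le> 0"
      using that by (meson not_le sum_nonpos)
    with total show False by simp
  qed
  moreover have "0 \<le> w $ i * e i" for i
    using nonneg assms(2) by (simp add: less_imp_le)
  ultimately show ?thesis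
    using assms(2) by (intro sum_pos2[of UNIV j]) simp_all
qed

definition mix_loss :: "real \<Rightarrow> real^'m \<Rightarrow> ('m \<Rightarrow> real) \<Rightarrow> real" where
  "mix_loss \<beta> w l = - \<beta> * ln (\<Sum>j\<in>UNIV. w $ j * exp (- l j / \<beta>))"

lemma abs_mix_loss_le:
  assumes "w \<in> prob_simplex" "0 < \<beta>"
  shows "\<bar>mix_loss \<beta> w l\<bar> \<le> (\<Sum>j\<in>UNIV. \<bar>l j\<bar>)"
proof -
  define B where "B = (\<Sum>j\<in>UNIV. \<bar>l j\<bar>)"
  define s where "s = (\<Sum>j\<in>UNIV. w $ j * exp (- l j / \<beta>))"
  have nonneg: "\<And>j. 0 \<le> w $ j" and total: "(\<Sum>j\<in>UNIV. w $ j) = 1"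
    using assms(1) by (auto simp: prob_simplex_def)
  have "\<bar>l j\<bar> \<le> B" for j
    unfolding B_def by (rule member_le_sum) auto
  then have "- B / \<beta> \<le> - l j / \<beta>" "- l j / \<beta> \<le> B / \<beta>" for j
    using assms(2) by (auto simp: abs_le_iff field_simps)
  then have "(\<Sum>j\<in>UNIV. w $ j * exp (- B / \<beta>)) \<le> s" "s \<le> (\<Sum>j\<in>UNIV. w $ j * exp (B / \<beta>))"
    unfolding s_def by (auto intro!: sum_mono mult_left_mono nonneg)
  then have "exp (- B / \<beta>) \<le> s" "s \<le> exp (B / \<beta>)"
    by (simp_all add: sum_distrib_right[symmetric] total)
  moreover have "0 < s"
    using calculation(1) by (rule less_le_trans[OF exp_gt_zero])
  ultimately have "- B / \<beta> \<le> ln s" "ln s \<le> B / \<beta>"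
    using ln_le_cancel_iff[of s "exp (B / \<beta>)"] by (simp_all add: ln_ge_iff)
  then have "\<beta> * (- B / \<beta>) \<le> \<beta> * ln s" "\<beta> * ln s \<le> \<beta> * (B / \<beta>)"
    using assms(2) by (meson less_imp_le mult_left_mono)+
  then show ?thesis
    using assms(2) unfolding mix_loss_def s_def[symmetric] B_def[symmetric] by simp
qed

lemma mix_loss_mean_le:
  assumes "finite A" "A \<noteq> {}" "\<And>i. i \<in> A \<Longrightarrow> w i \<in> prob_simplex" "0 \<le> \<beta>"
  shows "mix_loss \<beta> ((1 / real (card A)) *\<^sub>R (\<Sum>i\<in>A. w i)) l
    \<le> (\<Sum>i\<in>A. mix_loss \<beta> (w i) l) / real (card A)"
proof -
  define y where "y i = (\<Sum>j\<in>UNIV. w i $ j * exp (- l j / \<beta>))" for i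
  have "y i \<in> {0<..}" if "i \<in> A" for i
    unfolding y_def using assms(3)[OF that] by (simp add: prob_simplex_weighted_sum_pos)
  then have "(\<Sum>i\<in>A. (1 / real (card A)) * ln (y i)) \<le> ln (\<Sum>i\<in>A. (1 / real (card A)) *\<^sub>R y i)"
    using assms(1,2) by (intro concave_on_sum[OF _ _ ln_concave]) auto
  moreover have "(\<Sum>i\<in>A. (1 / real (card A)) *\<^sub>R y i)
      = (\<Sum>j\<in>UNIV. ((1 / real (card A)) *\<^sub>R (\<Sum>i\<in>A. w i)) $ j * exp (- l j / \<beta>))"
    unfolding y_def by (simp add: sum_component sum_distrib_left sum_distrib_right sum.swap[of _ A])
  ultimately have "\<beta> * (\<Sum>i\<in>A. (1 / real (card A)) * ln (y i))
      \<le> \<beta> * ln (\<Sum>j\<in>UNIV. ((1 / real (card A)) *\<^sub>R (\<Sum>i\<in>A. w i)) $ j * exp (- l j / \<beta>))"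
    using assms(4) by (simp add: mult_left_mono)
  then show ?thesis
    unfolding mix_loss_def y_def[symmetric]
    by (simp add: sum_distrib_left sum_divide_distrib sum_negf)
qed

lemma ln_shifted_mixture_eq:
  assumes "w \<in> prob_simplex" "\<beta> \<noteq> 0"
  shows "\<beta> * ln (\<Sum>j\<in>UNIV. w $ j * exp (- (l j - c) / \<beta>)) = c - mix_loss \<beta> w l"
proof -
  define s where "s = (\<Sum>j\<in>UNIV. w $ j * exp (- l j / \<beta>))"
  have "0 < s"
    unfolding s_def using assms(1) by (simp add: prob_simplex_weighted_sum_pos)
  have "exp (- (l j - c) / \<beta>) = exp (c / \<beta>) * exp (- l j / \<beta>)" for j
    by (simp add: exp_add[symmetric] diff_divide_distrib)
  then have "(\<Sum>j\<in>UNIV. w $ j * exp (- (l j - c) / \<beta>)) = exp (c / \<beta>) * s"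
    unfolding s_def by (simp add: sum_distrib_left ac_simps)
  moreover have "mix_loss \<beta> w l = - \<beta> * ln s"
    unfolding mix_loss_def s_def ..
  ultimately show ?thesis
    using \<open>0 < s\<close> assms(2) by (simp add: ln_mult distrib_left)
qed

section \<open>Mirror averaging\<close>

text \<open>\<open>softmin \<beta>\<close> is the function \<open>-W\<^sub>\<beta>\<close> of the paper.\<close>
definition softmin :: "real \<Rightarrow> real^'m \<Rightarrow> real" where
  "softmin \<beta> \<zeta> = - \<beta> * ln ((\<Sum>j\<in>UNIV. exp (- \<zeta> $ j / \<beta>)) / real CARD('m))"

lemma softmin_zero [simp]: "softmin \<beta> 0 = 0"
  by (simp add: softmin_def)

lemma softmin_le:
  fixes \<zeta> :: "real^'m"
  assumes "0 < \<beta>"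
  shows "softmin \<beta> \<zeta> \<le> \<zeta> $ j + \<beta> * ln (real CARD('m))"
proof -
  define s where "s = (\<Sum>k\<in>UNIV. exp (- \<zeta> $ k / \<beta>))"
  have "exp (- \<zeta> $ j / \<beta>) \<le> s"
    unfolding s_def by (rule member_le_sum) auto
  then have "- \<zeta> $ j / \<beta> \<le> ln s"
    using less_le_trans[OF exp_gt_zero] by (simp add: ln_ge_iff)
  then have "- \<zeta> $ j \<le> \<beta> * ln s"
    using assms by (simp add: field_simps)
  moreover have "0 < s"
    unfolding s_def by (simp add: sum_pos)
  ultimately show ?thesis
    unfolding softmin_def s_def[symmetric] by (simp add: ln_div algebra_simps)
qed

lemma zeta_0 [simp]: "zeta Q \<omega> 0 = 0"
  by (simp add: zeta_def vec_eq_iff)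

lemma zeta_Suc: "zeta Q \<omega> (Suc i) = zeta Q \<omega> i + (\<chi> j. Q (\<omega> (Suc i)) (axis j 1))"
  by (simp add: zeta_def vec_eq_iff)

lemma mix_loss_theta_md:
  fixes Q :: "'z \<Rightarrow> real^'m \<Rightarrow> real"
  shows "mix_loss \<beta> (theta_md \<beta> Q \<omega> i) (\<lambda>j. Q (\<omega> (Suc i)) (axis j 1))
    = softmin \<beta> (zeta Q \<omega> (Suc i)) - softmin \<beta> (zeta Q \<omega> i)"
proof -
  define Z where "Z k = (\<Sum>j\<in>UNIV. exp (- zeta Q \<omega> k $ j / \<beta>))" for k
  have "0 < Z k" for k
    unfolding Z_def by (simp add: sum_pos)
  have "(\<Sum>j\<in>UNIV. theta_md \<beta> Q \<omega> i $ j * exp (- Q (\<omega> (Suc i)) (axis j 1) / \<beta>)) = Z (Suc i) / Z i"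
    unfolding theta_md_def Z_def zeta_Suc
    by (simp add: sum_divide_distrib exp_add[symmetric] add_divide_distrib diff_divide_distrib)
  then have "mix_loss \<beta> (theta_md \<beta> Q \<omega> i) (\<lambda>j. Q (\<omega> (Suc i)) (axis j 1))
      = - \<beta> * ln (Z (Suc i) / Z i)"
    unfolding mix_loss_def by simp
  moreover have "softmin \<beta> (zeta Q \<omega> k) = - \<beta> * ln (Z k / real CARD('m))" for k
    unfolding softmin_def Z_def ..
  ultimately show ?thesis
    using \<open>0 < Z i\<close> \<open>0 < Z (Suc i)\<close> by (simp add: ln_div algebra_simps)
qed

lemma sum_mix_loss_theta_md:
  "(\<Sum>i=1..n. mix_loss \<beta> (theta_md \<beta> Q \<omega> (i - 1)) (\<lambda>j. Q (\<omega> i) (axis j 1)))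
    = softmin \<beta> (zeta Q \<omega> n)"
  by (induction n) (simp_all add: mix_loss_theta_md)

lemma theta_md_in_prob_simplex: "theta_md \<beta> Q \<omega> i \<in> prob_simplex"
proof -
  have "0 < (\<Sum>k\<in>UNIV. exp (- zeta Q \<omega> i $ k / \<beta>))"
    by (simp add: sum_pos)
  then show ?thesis
    by (auto simp: prob_simplex_def theta_md_def sum_divide_distrib[symmetric])
qed

lemma mirror_avg_in_prob_simplex:
  assumes "1 \<le> n"
  shows "mirror_avg \<beta> Q n \<omega> \<in> prob_simplex"
  using mean_in_prob_simplex[of "{1..n}" "\<lambda>i. theta_md \<beta> Q \<omega> (i - 1)"] assms
  by (simp add: mirror_avg_def theta_md_in_prob_simplex)

lemma theta_md_cong:
  assumes "\<And>k. k \<in> {1..i} \<Longrightarrow> \<omega> k = \<omega>' k"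
  shows "theta_md \<beta> Q \<omega> i = theta_md \<beta> Q \<omega>' i"
proof -
  have "zeta Q \<omega> i = zeta Q \<omega>' i"
    unfolding zeta_def using assms by (intro arg_cong[where f = vec_lambda] ext sum.cong) auto
  then show ?thesis
    unfolding theta_md_def by simp
qed

lemma mirror_avg_cong:
  assumes "\<And>k. k \<in> {1..<n} \<Longrightarrow> \<omega> k = \<omega>' k"
  shows "mirror_avg \<beta> Q n \<omega> = mirror_avg \<beta> Q n \<omega>'"
  unfolding mirror_avg_def using assms by (auto intro!: sum.cong theta_md_cong)

lemma borel_measurable_vec_lambda [measurable (raw)]:
  fixes f :: "'a \<Rightarrow> 'm::finite \<Rightarrow> real"
  assumes "\<And>j. (\<lambda>x. f x j) \<in> borel_measurable M"
  shows "(\<lambda>x. \<chi> j. f x j) \<in> borel_measurable M"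
proof (rule borel_measurable_euclidean_space[THEN iffD2], intro ballI)
  fix b :: "real^'m"
  assume "b \<in> Basis"
  then obtain i where "b = axis i 1"
    by (auto simp: Basis_vec_def)
  then show "(\<lambda>x. (\<chi> j. f x j) \<bullet> b) \<in> borel_measurable M"
    using assms[of i] by (simp add: inner_axis)
qed

lemma measurable_theta_md:
  assumes "\<And>j. (\<lambda>z. Q z (axis j 1)) \<in> borel_measurable P" "{1..i} \<subseteq> I"
  shows "(\<lambda>\<omega>. theta_md \<beta> Q \<omega> i) \<in> borel_measurable (PiM I (\<lambda>_. P))"
proof -
  have [measurable]: "(\<lambda>\<omega>. zeta Q \<omega> i $ j) \<in> borel_measurable (PiM I (\<lambda>_. P))" for j
    unfolding zeta_def vec_lambda_beta
    using assms by (intro borel_measurable_sum measurable_compose[OF measurable_component_singleton]) auto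
  show ?thesis
    unfolding theta_md_def by measurable
qed

lemma measurable_mirror_avg:
  assumes "\<And>j. (\<lambda>z. Q z (axis j 1)) \<in> borel_measurable P" "{1..<n} \<subseteq> I"
  shows "(\<lambda>\<omega>. mirror_avg \<beta> Q n \<omega>) \<in> borel_measurable (PiM I (\<lambda>_. P))"
  unfolding mirror_avg_def
proof (intro borel_measurable_scaleR borel_measurable_const borel_measurable_sum measurable_theta_md assms(1))
  fix i
  assume "i \<in> {1..n}"
  then have "{1..i - 1} \<subseteq> {1..<n}"
    by auto
  then show "{1..i - 1} \<subseteq> I"
    using assms(2) by blast
qed

section \<open>Extended expectations\<close>

lemma eexp_ereal:
  "eexp M (\<lambda>x. ereal (f x))
    = enn2ereal (\<integral>\<^sup>+x. ennreal (f x) \<partial>M) - enn2ereal (\<integral>\<^sup>+x. ennreal (- f x) \<partial>M)"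
  by (simp add: eexp_def)

lemma nn_integral_abs_eq_pos_plus_neg:
  fixes f :: "'a \<Rightarrow> real"
  assumes "f \<in> borel_measurable M"
  shows "(\<integral>\<^sup>+x. ennreal \<bar>f x\<bar> \<partial>M) = (\<integral>\<^sup>+x. ennreal (f x) \<partial>M) + (\<integral>\<^sup>+x. ennreal (- f x) \<partial>M)"
proof -
  have "ennreal \<bar>f x\<bar> = ennreal (f x) + ennreal (- f x)" for x
    by (cases "0 \<le> f x") (auto simp: ennreal_neg)
  then show ?thesis
    using assms by (simp add: nn_integral_add)
qed

lemma integrable_iff_pos_neg_finite:
  fixes f :: "'a \<Rightarrow> real"
  assumes "f \<in> borel_measurable M"
  shows "integrable M f
    \<longleftrightarrow> (\<integral>\<^sup>+x. ennreal (f x) \<partial>M) \<noteq> \<infinity> \<and> (\<integral>\<^sup>+x. ennreal (- f x) \<partial>M) \<noteq> \<infinity>"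
  using assms by (simp add: integrable_iff_bounded nn_integral_abs_eq_pos_plus_neg less_top)

lemma eexp_eq_integral:
  fixes f :: "'a \<Rightarrow> real"
  assumes "integrable M f"
  shows "eexp M (\<lambda>x. ereal (f x)) = ereal (\<integral>x. f x \<partial>M)"
proof -
  have "(\<integral>\<^sup>+x. ennreal (f x) \<partial>M) \<noteq> \<infinity>" "(\<integral>\<^sup>+x. ennreal (- f x) \<partial>M) \<noteq> \<infinity>"
    using assms integrable_iff_pos_neg_finite by blast+
  moreover have "enn2ereal x = ereal (enn2real x)" if "x \<noteq> \<infinity>" for x :: ennreal
    using that by (cases x rule: ennreal_cases) auto
  ultimately show ?thesis
    unfolding eexp_ereal real_lebesgue_integral_def[OF assms] by simp
qed

lemma integrableI_eexp:
  fixes f :: "'a \<Rightarrow> real"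
  assumes "f \<in> borel_measurable M" "\<bar>eexp M (\<lambda>x. ereal (f x))\<bar> \<noteq> \<infinity>"
  shows "integrable M f"
  using assms(2) unfolding integrable_iff_pos_neg_finite[OF assms(1)] eexp_ereal
  by (cases "\<integral>\<^sup>+x. ennreal (f x) \<partial>M" rule: ennreal_cases) auto

lemma eexp_cmult:
  fixes f :: "'a \<Rightarrow> real"
  assumes "f \<in> borel_measurable M" "0 < c"
  shows "eexp M (\<lambda>x. ereal (c * f x)) = ereal c * eexp M (\<lambda>x. ereal (f x))"
proof -
  define A where "A = enn2ereal (\<integral>\<^sup>+x. ennreal (f x) \<partial>M)"
  define B where "B = enn2ereal (\<integral>\<^sup>+x. ennreal (- f x) \<partial>M)"
  have "(\<integral>\<^sup>+x. ennreal (c * f x) \<partial>M) = ennreal c * (\<integral>\<^sup>+x. ennreal (f x) \<partial>M)"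
    "(\<integral>\<^sup>+x. ennreal (- (c * f x)) \<partial>M) = ennreal c * (\<integral>\<^sup>+x. ennreal (- f x) \<partial>M)"
    using assms by (simp_all add: nn_integral_cmult[symmetric] ennreal_mult'[symmetric])
  then have "eexp M (\<lambda>x. ereal (c * f x)) = ereal c * A - ereal c * B"
    using assms(2) by (simp add: eexp_ereal A_def B_def times_ennreal.rep_eq)
  moreover have "ereal c * A - ereal c * B = ereal c * (A - B)"
    using assms(2) by (cases A; cases B) (auto simp: A_def B_def right_diff_distrib)
  ultimately show ?thesis
    by (simp add: eexp_ereal A_def B_def)
qed

lemma ennreal_add_le_abs_plus: "ennreal (a + b) \<le> ennreal \<bar>a\<bar> + ennreal b"
proof (cases "0 \<le> b")
  case True
  then have "ennreal (a + b) \<le> ennreal (\<bar>a\<bar> + b)"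
    by (intro ennreal_leI) simp
  with True show ?thesis
    by simp
next
  case False
  then have "ennreal (a + b) \<le> ennreal \<bar>a\<bar>"
    by (intro ennreal_leI) simp
  then show ?thesis
    by (simp add: add_increasing2)
qed

lemma nn_integral_add_integrable_eq_top_iff:
  fixes f g :: "'a \<Rightarrow> real"
  assumes "integrable M g" "f \<in> borel_measurable M"
  shows "(\<integral>\<^sup>+x. ennreal (g x + f x) \<partial>M) = \<infinity> \<longleftrightarrow> (\<integral>\<^sup>+x. ennreal (f x) \<partial>M) = \<infinity>"
proof -
  have [measurable]: "g \<in> borel_measurable M" "f \<in> borel_measurable M"
    using assms by auto
  define G where "G = (\<integral>\<^sup>+x. ennreal \<bar>g x\<bar> \<partial>M)"
  have "G \<noteq> \<infinity>"
    using assms(1) by (simp add: G_def integrable_iff_bounded less_top)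
  have "(\<integral>\<^sup>+x. ennreal (g x + f x) \<partial>M) \<le> G + (\<integral>\<^sup>+x. ennreal (f x) \<partial>M)"
    unfolding G_def by (subst nn_integral_add[symmetric]) (auto intro!: nn_integral_mono ennreal_add_le_abs_plus)
  moreover have "(\<integral>\<^sup>+x. ennreal (f x) \<partial>M) \<le> G + (\<integral>\<^sup>+x. ennreal (g x + f x) \<partial>M)"
    using ennreal_add_le_abs_plus[of "- g x" "g x + f x" for x]
    unfolding G_def by (subst nn_integral_add[symmetric]) (auto intro!: nn_integral_mono)
  ultimately show ?thesis
    using \<open>G \<noteq> \<infinity>\<close> by (auto simp: top_unique)
qed

lemma eexp_add_integrable:
  fixes f g :: "'a \<Rightarrow> real"
  assumes "integrable M g" "f \<in> borel_measurable M"
  shows "eexp M (\<lambda>x. ereal (g x + f x)) = ereal (\<integral>x. g x \<partial>M) + eexp M (\<lambda>x. ereal (f x))"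
proof (cases "integrable M f")
  case True
  then show ?thesis
    using assms(1) by (simp add: eexp_eq_integral)
next
  \<comment> \<open>Both sides are \<open>\<infinity>\<close> if \<open>f\<close> has an infinite positive part (recall \<open>\<infinity> - \<infinity> = \<infinity>\<close>
    in \<open>ereal\<close>), and \<open>-\<infinity>\<close> otherwise.\<close>
  case False
  have pos: "(\<integral>\<^sup>+x. ennreal (g x + f x) \<partial>M) = \<infinity> \<longleftrightarrow> (\<integral>\<^sup>+x. ennreal (f x) \<partial>M) = \<infinity>"
    using assms by (rule nn_integral_add_integrable_eq_top_iff)
  have "(\<integral>\<^sup>+x. ennreal (- g x + - f x) \<partial>M) = \<infinity> \<longleftrightarrow> (\<integral>\<^sup>+x. ennreal (- f x) \<partial>M) = \<infinity>"
    using assms by (intro nn_integral_add_integrable_eq_top_iff) auto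
  then have neg: "(\<integral>\<^sup>+x. ennreal (- (g x + f x)) \<partial>M) = \<infinity> \<longleftrightarrow> (\<integral>\<^sup>+x. ennreal (- f x) \<partial>M) = \<infinity>"
    by simp
  consider "(\<integral>\<^sup>+x. ennreal (f x) \<partial>M) = \<infinity>"
    | "(\<integral>\<^sup>+x. ennreal (f x) \<partial>M) \<noteq> \<infinity>" "(\<integral>\<^sup>+x. ennreal (- f x) \<partial>M) = \<infinity>"
    using False assms(2) integrable_iff_pos_neg_finite by blast
  then show ?thesis
  proof cases
    case 1
    then show ?thesis
      using pos by (simp add: eexp_ereal)
  next
    case 2
    have "enn2ereal x - \<infinity> = - \<infinity>" if "x \<noteq> \<infinity>" for x :: ennreal
      using that by (cases x rule: ennreal_cases) auto
    with 2 show ?thesis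
      using pos neg by (simp add: eexp_ereal)
  qed
qed

lemma e2ennreal_diff_add_eq:
  fixes a b :: ennreal
  shows "e2ennreal (enn2ereal a - enn2ereal b) + b = e2ennreal (- (enn2ereal a - enn2ereal b)) + a"
proof (cases a rule: ennreal_cases)
  case (real r)
  then show ?thesis
  proof (cases b rule: ennreal_cases)
    case (real s)
    with \<open>a = ennreal r\<close> \<open>0 \<le> r\<close> show ?thesis
      by (cases "r \<le> s") (simp_all add: ennreal_neg ennreal_plus[symmetric] del: ennreal_plus)
  qed (use real in simp)
qed (cases b rule: ennreal_cases; simp)

lemma e2ennreal_diff_le:
  fixes a b :: ennreal
  shows "e2ennreal (enn2ereal a - enn2ereal b) \<le> a"
    and "e2ennreal (- (enn2ereal a - enn2ereal b)) \<le> b"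
  by (cases a rule: ennreal_cases; cases b rule: ennreal_cases; auto intro!: ennreal_leI simp: e2ennreal_neg)+

lemma enn2ereal_diff_le_diff:
  fixes p q a b :: ennreal
  assumes "p + b = q + a" "p \<le> a" "q \<le> b"
  shows "enn2ereal p - enn2ereal q \<le> enn2ereal a - enn2ereal b"
proof -
  consider "a = \<infinity>" | "a \<noteq> \<infinity>" "b = \<infinity>" | "a \<noteq> \<infinity>" "b \<noteq> \<infinity>"
    by blast
  then show ?thesis
  proof cases
    case 2
    then have "q + a = \<infinity>"
      using assms(1) by simp
    then have "q = \<infinity>"
      using 2 by simp
    moreover have "p \<noteq> \<infinity>"
      using assms(2) 2 by (auto simp: top_unique)
    ultimately show ?thesis
      by (cases p rule: ennreal_cases) auto
  next
    case 3
    then have "p \<noteq> \<infinity>" "q \<noteq> \<infinity>"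
      using assms(2,3) by (auto simp: top_unique)
    with 3 assms(1) show ?thesis
      by (cases p rule: ennreal_cases; cases q rule: ennreal_cases;
          cases a rule: ennreal_cases; cases b rule: ennreal_cases)
        (simp_all add: ennreal_plus[symmetric] del: ennreal_plus)
  qed simp
qed

lemma eexp_diff_le:
  fixes a b :: "'a \<Rightarrow> ennreal"
  assumes [measurable]: "a \<in> borel_measurable M" "b \<in> borel_measurable M"
  shows "eexp M (\<lambda>x. enn2ereal (a x) - enn2ereal (b x))
    \<le> enn2ereal (\<integral>\<^sup>+x. a x \<partial>M) - enn2ereal (\<integral>\<^sup>+x. b x \<partial>M)"
proof -
  define p where "p = (\<integral>\<^sup>+x. e2ennreal (enn2ereal (a x) - enn2ereal (b x)) \<partial>M)"
  define q where "q = (\<integral>\<^sup>+x. e2ennreal (- (enn2ereal (a x) - enn2ereal (b x))) \<partial>M)"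
  have "p + (\<integral>\<^sup>+x. b x \<partial>M) = (\<integral>\<^sup>+x. e2ennreal (enn2ereal (a x) - enn2ereal (b x)) + b x \<partial>M)"
    unfolding p_def by (rule nn_integral_add[symmetric]) measurable
  also have "\<dots> = (\<integral>\<^sup>+x. e2ennreal (- (enn2ereal (a x) - enn2ereal (b x))) + a x \<partial>M)"
    by (simp only: e2ennreal_diff_add_eq)
  also have "\<dots> = q + (\<integral>\<^sup>+x. a x \<partial>M)"
    unfolding q_def by (rule nn_integral_add) measurable
  finally have "p + (\<integral>\<^sup>+x. b x \<partial>M) = q + (\<integral>\<^sup>+x. a x \<partial>M)" .
  moreover have "p \<le> (\<integral>\<^sup>+x. a x \<partial>M)" "q \<le> (\<integral>\<^sup>+x. b x \<partial>M)"
    unfolding p_def q_def by (auto intro!: nn_integral_mono e2ennreal_diff_le)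
  ultimately show ?thesis
    unfolding eexp_def p_def[symmetric] q_def[symmetric] by (rule enn2ereal_diff_le_diff)
qed

section \<open>Products of a probability space\<close>

lemma integrable_PiM_component:
  fixes f :: "'a \<Rightarrow> real"
  assumes "\<And>i. i \<in> I \<Longrightarrow> prob_space (M i)" "k \<in> I" "integrable (M k) f"
  shows "integrable (PiM I M) (\<lambda>\<omega>. f (\<omega> k))"
  using integrable_distr_eq[of "\<lambda>\<omega>. \<omega> k" "PiM I M" "M k" f] assms
  by (simp add: distr_PiM_component)

lemma integral_PiM_component:
  fixes f :: "'a \<Rightarrow> real"
  assumes "\<And>i. i \<in> I \<Longrightarrow> prob_space (M i)" "k \<in> I" "f \<in> borel_measurable (M k)"
  shows "(\<integral>\<omega>. f (\<omega> k) \<partial>PiM I M) = (\<integral>z. f z \<partial>M k)"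
  using integral_distr[of "\<lambda>\<omega>. \<omega> k" "PiM I M" "M k" f] assms
  by (simp add: distr_PiM_component)

lemma integral_PiM_reindex:
  fixes g :: "('i \<Rightarrow> 'a) \<Rightarrow> real"
  assumes "prob_space P" "inj_on \<sigma> I" "\<sigma> \<in> I \<rightarrow> I" "g \<in> borel_measurable (PiM I (\<lambda>_. P))"
  shows "(\<integral>\<omega>. g \<omega> \<partial>PiM I (\<lambda>_. P)) = (\<integral>\<omega>. g (\<lambda>k\<in>I. \<omega> (\<sigma> k)) \<partial>PiM I (\<lambda>_. P))"
proof -
  have "(\<lambda>\<omega>. \<lambda>k\<in>I. \<omega> (\<sigma> k)) \<in> measurable (PiM I (\<lambda>_. P)) (PiM I (\<lambda>_. P))"
  proof (rule measurable_restrict)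
    fix k
    assume "k \<in> I"
    then show "(\<lambda>\<omega>. \<omega> (\<sigma> k)) \<in> measurable (PiM I (\<lambda>_. P)) P"
      using assms(3) by (intro measurable_component_singleton) auto
  qed
  moreover have "distr (PiM I (\<lambda>_. P)) (PiM I (\<lambda>_. P)) (\<lambda>\<omega>. \<lambda>k\<in>I. \<omega> (\<sigma> k)) = PiM I (\<lambda>_. P)"
    using distr_PiM_reindex[of I "\<lambda>_. P" \<sigma> I] assms(1-3) by simp
  ultimately show ?thesis
    using integral_distr assms(4) by metis
qed

lemma eexp_PiM_insert_le:
  fixes f :: "('i \<Rightarrow> 'a) \<Rightarrow> real"
  assumes "product_sigma_finite M" "finite I" "i \<notin> I"
    and [measurable]: "f \<in> borel_measurable (PiM (insert i I) M)"
  shows "eexp (PiM I M) (\<lambda>x. eexp (M i) (\<lambda>y. ereal (f (x(i := y)))))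
    \<le> eexp (PiM (insert i I) M) (\<lambda>x. ereal (f x))"
proof -
  interpret product_sigma_finite M
    by (fact assms(1))
  interpret sigma_finite_measure "M i"
    by (fact sigma_finite_measures)
  define A where "A x = (\<integral>\<^sup>+y. ennreal (f (x(i := y))) \<partial>M i)" for x
  define B where "B x = (\<integral>\<^sup>+y. ennreal (- f (x(i := y))) \<partial>M i)" for x
  have [measurable]: "A \<in> borel_measurable (PiM I M)" "B \<in> borel_measurable (PiM I M)"
    unfolding A_def B_def by measurable
  have "eexp (PiM I M) (\<lambda>x. eexp (M i) (\<lambda>y. ereal (f (x(i := y)))))
      = eexp (PiM I M) (\<lambda>x. enn2ereal (A x) - enn2ereal (B x))"
    by (simp add: eexp_ereal A_def B_def)
  also have "\<dots> \<le> enn2ereal (\<integral>\<^sup>+x. A x \<partial>PiM I M) - enn2ereal (\<integral>\<^sup>+x. B x \<partial>PiM I M)"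
    by (rule eexp_diff_le) measurable
  also have "\<dots> = eexp (PiM (insert i I) M) (\<lambda>x. ereal (f x))"
    using assms(2,3) by (simp add: eexp_ereal A_def B_def product_nn_integral_insert)
  finally show ?thesis .
qed

section \<open>The risk bound\<close>

lemma integrable_mix_loss_PiM:
  fixes l :: "'z \<Rightarrow> 'm::finite \<Rightarrow> real"
  assumes "prob_space P" "\<And>j. integrable P (\<lambda>z. l z j)" "k \<in> I" "0 < \<beta>"
    and "w \<in> borel_measurable (PiM I (\<lambda>_. P))" "\<And>\<omega>. w \<omega> \<in> prob_simplex"
  shows "integrable (PiM I (\<lambda>_. P)) (\<lambda>\<omega>. mix_loss \<beta> (w \<omega>) (l (\<omega> k)))"
proof (rule Bochner_Integration.integrable_bound)
  have [measurable]: "(\<lambda>\<omega>. w \<omega> $ j) \<in> borel_measurable (PiM I (\<lambda>_. P))" for j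
    using measurable_compose[OF assms(5) borel_measurable_nth] .
  have [measurable]: "(\<lambda>\<omega>. l (\<omega> k) j) \<in> borel_measurable (PiM I (\<lambda>_. P))" for j
    using assms(2,3) by (intro measurable_compose[OF measurable_component_singleton]) auto
  show "(\<lambda>\<omega>. mix_loss \<beta> (w \<omega>) (l (\<omega> k))) \<in> borel_measurable (PiM I (\<lambda>_. P))"
    unfolding mix_loss_def by measurable
  show "integrable (PiM I (\<lambda>_. P)) (\<lambda>\<omega>. \<Sum>j\<in>UNIV. \<bar>l (\<omega> k) j\<bar>)"
    using assms(1-3) by (intro Bochner_Integration.integrable_sum integrable_PiM_component) auto
  show "AE \<omega> in PiM I (\<lambda>_. P). norm (mix_loss \<beta> (w \<omega>) (l (\<omega> k))) \<le> norm (\<Sum>j\<in>UNIV. \<bar>l (\<omega> k) j\<bar>)"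
    using abs_mix_loss_le[OF assms(6,4)] by (simp add: order_trans[OF _ abs_ge_self])
qed

text \<open>Exchangeability: transposing the coordinates \<open>i\<close> and \<open>n\<close> does not change \<open>\<theta>\<^bsub>i-1\<^esub>\<close>.\<close>
lemma integral_mix_loss_theta_md_swap:
  assumes "prob_space P" "\<And>j. (\<lambda>z. Q z (axis j 1)) \<in> borel_measurable P" "i \<in> {1..n}"
  shows "(\<integral>\<omega>. mix_loss \<beta> (theta_md \<beta> Q \<omega> (i - 1)) (\<lambda>j. Q (\<omega> n) (axis j 1)) \<partial>PiM {1..n} (\<lambda>_. P))
    = (\<integral>\<omega>. mix_loss \<beta> (theta_md \<beta> Q \<omega> (i - 1)) (\<lambda>j. Q (\<omega> i) (axis j 1)) \<partial>PiM {1..n} (\<lambda>_. P))"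
proof -
  let ?\<sigma> = "Transposition.transpose i n"
  define G where "G \<omega> = mix_loss \<beta> (theta_md \<beta> Q \<omega> (i - 1)) (\<lambda>j. Q (\<omega> n) (axis j 1))" for \<omega>
  have "(\<lambda>\<omega>. theta_md \<beta> Q \<omega> (i - 1)) \<in> borel_measurable (PiM {1..n} (\<lambda>_. P))"
    using assms(2,3) by (intro measurable_theta_md) auto
  from measurable_compose[OF this borel_measurable_nth]
  have [measurable]: "(\<lambda>\<omega>. theta_md \<beta> Q \<omega> (i - 1) $ j) \<in> borel_measurable (PiM {1..n} (\<lambda>_. P))" for j .
  have [measurable]: "(\<lambda>\<omega>. Q (\<omega> n) (axis j 1)) \<in> borel_measurable (PiM {1..n} (\<lambda>_. P))" for j
    using assms(2,3) by (intro measurable_compose[OF measurable_component_singleton]) auto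
  have "G \<in> borel_measurable (PiM {1..n} (\<lambda>_. P))"
    unfolding G_def mix_loss_def by measurable
  moreover have "?\<sigma> \<in> {1..n} \<rightarrow> {1..n}"
    using assms(3) by (auto simp: Transposition.transpose_def)
  ultimately have "(\<integral>\<omega>. G \<omega> \<partial>PiM {1..n} (\<lambda>_. P)) = (\<integral>\<omega>. G (\<lambda>k\<in>{1..n}. \<omega> (?\<sigma> k)) \<partial>PiM {1..n} (\<lambda>_. P))"
    using assms(1) by (intro integral_PiM_reindex) auto
  also have "\<dots> = (\<integral>\<omega>. mix_loss \<beta> (theta_md \<beta> Q \<omega> (i - 1)) (\<lambda>j. Q (\<omega> i) (axis j 1)) \<partial>PiM {1..n} (\<lambda>_. P))"
  proof (intro Bochner_Integration.integral_cong refl)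
    fix \<omega> :: "nat \<Rightarrow> 'a"
    have "theta_md \<beta> Q (\<lambda>k\<in>{1..n}. \<omega> (?\<sigma> k)) (i - 1) = theta_md \<beta> Q \<omega> (i - 1)"
      using assms(3) by (intro theta_md_cong) (auto simp: Transposition.transpose_def)
    then show "G (\<lambda>k\<in>{1..n}. \<omega> (?\<sigma> k)) = mix_loss \<beta> (theta_md \<beta> Q \<omega> (i - 1)) (\<lambda>j. Q (\<omega> i) (axis j 1))"
      using assms(3) by (simp add: G_def)
  qed
  finally show ?thesis
    unfolding G_def .
qed

lemma sum_integral_mix_loss_theta_md_le:
  fixes Q :: "'z \<Rightarrow> real^'m \<Rightarrow> real"
  assumes "prob_space P" "\<And>j. integrable P (\<lambda>z. Q z (axis j 1))" "0 < \<beta>"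
  shows "(\<Sum>i=1..n. \<integral>\<omega>. mix_loss \<beta> (theta_md \<beta> Q \<omega> (i - 1)) (\<lambda>j. Q (\<omega> i) (axis j 1)) \<partial>PiM {1..n} (\<lambda>_. P))
    \<le> \<beta> * ln (real CARD('m)) + real n * (\<integral>z. Q z (axis j 1) \<partial>P)"
proof -
  define Pn where "Pn = PiM {1..n} (\<lambda>_. P)"
  interpret Pn: prob_space Pn
    unfolding Pn_def using assms(1) by (intro prob_space_PiM) auto
  define H where "H i \<omega> = mix_loss \<beta> (theta_md \<beta> Q \<omega> (i - 1)) (\<lambda>j. Q (\<omega> i) (axis j 1))" for i \<omega>
  have H_int: "integrable Pn (H i)" if "i \<in> {1..n}" for i
    unfolding H_def Pn_def using assms that
    by (intro integrable_mix_loss_PiM[where l = "\<lambda>z j. Q z (axis j 1)"] measurable_theta_md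
        theta_md_in_prob_simplex) auto
  have Q_int: "integrable Pn (\<lambda>\<omega>. Q (\<omega> k) (axis j 1))" if "k \<in> {1..n}" for k
    unfolding Pn_def using assms that by (intro integrable_PiM_component) auto
  have telescope: "(\<Sum>i=1..n. H i \<omega>) \<le> \<beta> * ln (real CARD('m)) + (\<Sum>k=1..n. Q (\<omega> k) (axis j 1))" for \<omega>
  proof -
    have "(\<Sum>i=1..n. H i \<omega>) = softmin \<beta> (zeta Q \<omega> n)"
      unfolding H_def by (rule sum_mix_loss_theta_md)
    also have "\<dots> \<le> zeta Q \<omega> n $ j + \<beta> * ln (real CARD('m))"
      using assms(3) by (rule softmin_le)
    finally show ?thesis
      by (simp add: zeta_def)
  qed
  have "(\<Sum>i=1..n. integral\<^sup>L Pn (H i)) = (\<integral>\<omega>. (\<Sum>i=1..n. H i \<omega>) \<partial>Pn)"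
    by (rule Bochner_Integration.integral_sum[symmetric]) (rule H_int)
  also have "\<dots> \<le> (\<integral>\<omega>. \<beta> * ln (real CARD('m)) + (\<Sum>k=1..n. Q (\<omega> k) (axis j 1)) \<partial>Pn)"
    using H_int Q_int telescope
    by (intro integral_mono Bochner_Integration.integrable_add Bochner_Integration.integrable_sum) auto
  also have "\<dots> = \<beta> * ln (real CARD('m)) + (\<Sum>k=1..n. \<integral>\<omega>. Q (\<omega> k) (axis j 1) \<partial>Pn)"
    using Q_int by (subst Bochner_Integration.integral_add)
      (auto intro!: Bochner_Integration.integrable_sum simp: Bochner_Integration.integral_sum Pn.prob_space)
  also have "(\<Sum>k=1..n. \<integral>\<omega>. Q (\<omega> k) (axis j 1) \<partial>Pn) = (\<Sum>k=1..n. \<integral>z. Q z (axis j 1) \<partial>P)"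
    unfolding Pn_def using assms(1,2) by (intro sum.cong refl integral_PiM_component) auto
  also have "\<dots> = real n * (\<integral>z. Q z (axis j 1) \<partial>P)"
    by simp
  finally show ?thesis
    unfolding H_def Pn_def .
qed

lemma integral_mix_loss_mirror_avg_le:
  fixes Q :: "'z \<Rightarrow> real^'m \<Rightarrow> real"
  assumes "prob_space P" "\<And>j. integrable P (\<lambda>z. Q z (axis j 1))" "0 < \<beta>" "1 \<le> n"
  shows "(\<integral>\<omega>. mix_loss \<beta> (mirror_avg \<beta> Q n \<omega>) (\<lambda>j. Q (\<omega> n) (axis j 1)) \<partial>PiM {1..n} (\<lambda>_. P))
    \<le> (\<integral>z. Q z (axis j 1) \<partial>P) + \<beta> * ln (real CARD('m)) / real n"
proof -
  let ?Pn = "PiM {1..n} (\<lambda>_. P)"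
  define G where "G i \<omega> = mix_loss \<beta> (theta_md \<beta> Q \<omega> (i - 1)) (\<lambda>j. Q (\<omega> n) (axis j 1))" for i \<omega>
  have Q_meas: "(\<lambda>z. Q z (axis j 1)) \<in> borel_measurable P" for j
    using assms(2) by auto
  have G_int: "integrable ?Pn (G i)" if "i \<in> {1..n}" for i
    unfolding G_def using assms that
    by (intro integrable_mix_loss_PiM[where l = "\<lambda>z j. Q z (axis j 1)"] measurable_theta_md
        theta_md_in_prob_simplex) auto
  have "mix_loss \<beta> (mirror_avg \<beta> Q n \<omega>) (\<lambda>j. Q (\<omega> n) (axis j 1)) \<le> (\<Sum>i=1..n. G i \<omega>) / real n" for \<omega>
    using mix_loss_mean_le[of "{1..n}" "\<lambda>i. theta_md \<beta> Q \<omega> (i - 1)" \<beta>] assms(3,4)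
    by (simp add: mirror_avg_def G_def theta_md_in_prob_simplex)
  then have "(\<integral>\<omega>. mix_loss \<beta> (mirror_avg \<beta> Q n \<omega>) (\<lambda>j. Q (\<omega> n) (axis j 1)) \<partial>?Pn)
      \<le> (\<integral>\<omega>. (\<Sum>i=1..n. G i \<omega>) / real n \<partial>?Pn)"
    using assms G_int
    by (intro integral_mono integrable_mix_loss_PiM[where l = "\<lambda>z j. Q z (axis j 1)"]
        measurable_mirror_avg mirror_avg_in_prob_simplex integrable_divide_zero
        Bochner_Integration.integrable_sum) auto
  also have "\<dots> = (\<Sum>i=1..n. integral\<^sup>L ?Pn (G i)) / real n"
    using G_int by (simp add: Bochner_Integration.integral_sum)
  also have "(\<Sum>i=1..n. integral\<^sup>L ?Pn (G i))
      = (\<Sum>i=1..n. \<integral>\<omega>. mix_loss \<beta> (theta_md \<beta> Q \<omega> (i - 1)) (\<lambda>j. Q (\<omega> i) (axis j 1)) \<partial>?Pn)"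
    unfolding G_def using assms(1) Q_meas by (intro sum.cong refl integral_mix_loss_theta_md_swap) auto
  also have "\<dots> \<le> \<beta> * ln (real CARD('m)) + real n * (\<integral>z. Q z (axis j 1) \<partial>P)"
    using assms(1-3) by (rule sum_integral_mix_loss_theta_md_le)
  finally show ?thesis
    using assms(4) by (simp add: divide_right_mono field_simps)
qed

lemma measurable_loss_mirror_avg:
  fixes Q :: "'z \<Rightarrow> real^'m \<Rightarrow> real"
  assumes "(\<lambda>(z, \<theta>). Q z \<theta>) \<in> borel_measurable (P \<Otimes>\<^sub>M restrict_space borel prob_simplex)" "1 \<le> n"
  shows "(\<lambda>\<omega>. Q (\<omega> n) (mirror_avg \<beta> Q n \<omega>)) \<in> borel_measurable (PiM {1..n} (\<lambda>_. P))"
proof -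
  have "(\<lambda>z. Q z (axis j 1)) \<in> borel_measurable P" for j
    using measurable_Pair1[OF assms(1), of "axis j 1"] by (simp add: space_restrict_space axis_in_prob_simplex)
  then have "mirror_avg \<beta> Q n \<in> measurable (PiM {1..n} (\<lambda>_. P)) (restrict_space borel prob_simplex)"
    using assms(2) mirror_avg_in_prob_simplex[OF assms(2)]
    by (intro measurable_restrict_space2 measurable_mirror_avg) auto
  then have "(\<lambda>\<omega>. (\<omega> n, mirror_avg \<beta> Q n \<omega>))
      \<in> measurable (PiM {1..n} (\<lambda>_. P)) (P \<Otimes>\<^sub>M restrict_space borel prob_simplex)"
    using assms(2) by (intro measurable_Pair measurable_component_singleton) auto
  from measurable_comp[OF this assms(1)] show ?thesis
    by (simp add: comp_def)
qed

lemma eexp_risk_mirror_avg_le: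
  fixes Q :: "'z \<Rightarrow> real^'m \<Rightarrow> real"
  assumes "prob_space P" "1 \<le> n"
    and "(\<lambda>\<omega>. Q (\<omega> n) (mirror_avg \<beta> Q n \<omega>)) \<in> borel_measurable (PiM {1..n} (\<lambda>_. P))"
  shows "eexp (PiM {1..<n} (\<lambda>_. P)) (\<lambda>\<omega>. risk P Q (mirror_avg \<beta> Q n \<omega>))
    \<le> eexp (PiM {1..n} (\<lambda>_. P)) (\<lambda>\<omega>. ereal (Q (\<omega> n) (mirror_avg \<beta> Q n \<omega>)))"
proof -
  have "product_sigma_finite (\<lambda>_::nat. P)"
    using assms(1) by (simp add: product_sigma_finite_def prob_space_imp_sigma_finite)
  moreover have insert: "{1..n} = insert n {1..<n}"
    using assms(2) by auto
  ultimately have "eexp (PiM {1..<n} (\<lambda>_. P))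
      (\<lambda>x. eexp P (\<lambda>z. ereal (Q ((x(n := z)) n) (mirror_avg \<beta> Q n (x(n := z))))))
    \<le> eexp (PiM {1..n} (\<lambda>_. P)) (\<lambda>\<omega>. ereal (Q (\<omega> n) (mirror_avg \<beta> Q n \<omega>)))"
    using assms(3) unfolding insert by (intro eexp_PiM_insert_le) auto
  moreover have "mirror_avg \<beta> Q n (x(n := z)) = mirror_avg \<beta> Q n x" for x z
    by (rule mirror_avg_cong) auto
  ultimately show ?thesis
    by (simp add: risk_def)
qed

lemma eexp_loss_mirror_avg_le:
  fixes Q :: "'z \<Rightarrow> real^'m \<Rightarrow> real"
  assumes "prob_space P" "\<And>j. integrable P (\<lambda>z. Q z (axis j 1))" "0 < \<beta>" "1 \<le> n"
    and "(\<lambda>\<omega>. Q (\<omega> n) (mirror_avg \<beta> Q n \<omega>)) \<in> borel_measurable (PiM {1..n} (\<lambda>_. P))"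
  shows "eexp (PiM {1..n} (\<lambda>_. P)) (\<lambda>\<omega>. ereal (Q (\<omega> n) (mirror_avg \<beta> Q n \<omega>)))
    \<le> ereal ((\<integral>z. Q z (axis j 1) \<partial>P) + \<beta> * ln (real CARD('m)) / real n)
      + ereal \<beta> * eexp (PiM {1..n} (\<lambda>_. P)) (\<lambda>\<omega>. ereal (ln (\<Sum>j\<in>UNIV. mirror_avg \<beta> Q n \<omega> $ j *
          exp (- (Q (\<omega> n) (axis j 1) - Q (\<omega> n) (mirror_avg \<beta> Q n \<omega>)) / \<beta>))))"
proof -
  define Pn where "Pn = PiM {1..n} (\<lambda>_. P)"
  define F where "F \<omega> = Q (\<omega> n) (mirror_avg \<beta> Q n \<omega>)" for \<omega>
  define L where "L \<omega> = mix_loss \<beta> (mirror_avg \<beta> Q n \<omega>) (\<lambda>j. Q (\<omega> n) (axis j 1))" for \<omega>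
  define S where "S \<omega> = ln (\<Sum>j\<in>UNIV. mirror_avg \<beta> Q n \<omega> $ j *
    exp (- (Q (\<omega> n) (axis j 1) - Q (\<omega> n) (mirror_avg \<beta> Q n \<omega>)) / \<beta>))" for \<omega>
  have F_eq: "F \<omega> = L \<omega> + \<beta> * S \<omega>" for \<omega>
    using ln_shifted_mixture_eq[OF mirror_avg_in_prob_simplex[OF assms(4)], of \<beta> \<beta> Q \<omega>
        "\<lambda>j. Q (\<omega> n) (axis j 1)" "F \<omega>"] assms(3)
    unfolding F_def L_def S_def by simp
  have L_int: "integrable Pn L"
    unfolding L_def Pn_def using assms
    by (intro integrable_mix_loss_PiM[where l = "\<lambda>z j. Q z (axis j 1)"] measurable_mirror_avg
        mirror_avg_in_prob_simplex) auto
  have [measurable]: "F \<in> borel_measurable Pn"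
    unfolding Pn_def F_def[abs_def] by (fact assms(5))
  have [measurable]: "L \<in> borel_measurable Pn"
    using L_int by auto
  have "S = (\<lambda>\<omega>. (F \<omega> - L \<omega>) / \<beta>)"
    using F_eq assms(3) by (simp add: fun_eq_iff)
  then have S_meas: "S \<in> borel_measurable Pn"
    by simp
  have "eexp Pn (\<lambda>\<omega>. ereal (F \<omega>)) = ereal (integral\<^sup>L Pn L) + eexp Pn (\<lambda>\<omega>. ereal (\<beta> * S \<omega>))"
    unfolding F_eq using L_int S_meas by (intro eexp_add_integrable) auto
  also have "\<dots> = ereal (integral\<^sup>L Pn L) + ereal \<beta> * eexp Pn (\<lambda>\<omega>. ereal (S \<omega>))"
    using S_meas assms(3) by (simp add: eexp_cmult)
  also have "\<dots> \<le> ereal ((\<integral>z. Q z (axis j 1) \<partial>P) + \<beta> * ln (real CARD('m)) / real n)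
      + ereal \<beta> * eexp Pn (\<lambda>\<omega>. ereal (S \<omega>))"
    using integral_mix_loss_mirror_avg_le[where Q = Q and P = P and j = j, OF assms(1-4)]
    unfolding Pn_def L_def[abs_def] by (intro add_right_mono) simp
  finally show ?thesis
    unfolding Pn_def F_def S_def .
qed

theorem lemma4p1:
  fixes P :: "'z measure" and Q :: "'z \<Rightarrow> real^'m \<Rightarrow> real"
    and \<beta> :: real and n :: nat
  assumes "prob_space P"
    and "(\<lambda>(z, \<theta>). Q z \<theta>) \<in> borel_measurable (P \<Otimes>\<^sub>M restrict_space borel (prob_simplex :: (real^'m) set))"
    and "\<forall>\<theta>\<in>prob_simplex. eexp_exists P (\<lambda>z. ereal (Q z \<theta>))"
    and "\<forall>j. \<bar>risk P Q (axis j 1)\<bar> \<noteq> \<infinity>"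
    and "\<beta> > 0"
    and "CARD('m) \<ge> 2"
    and "n \<ge> 1"
  shows "eexp (PiM {1..<n} (\<lambda>_. P)) (\<lambda>\<omega>. risk P Q (mirror_avg \<beta> Q n \<omega>))
     \<le> (MIN j\<in>UNIV. risk P Q (axis j 1))
        + ereal (\<beta> * ln (real CARD('m)) / real n)
        + ereal \<beta> * eexp (PiM {1..n} (\<lambda>_. P))
            (\<lambda>\<omega>. ereal (ln (\<Sum>j\<in>UNIV. mirror_avg \<beta> Q n \<omega> $ j *
               exp (- (Q (\<omega> n) (axis j 1) - Q (\<omega> n) (mirror_avg \<beta> Q n \<omega>)) / \<beta>))))"
proof -
  have Q_int: "integrable P (\<lambda>z. Q z (axis j 1))" for j
    using measurable_Pair1[OF assms(2), of "axis j 1"] assms(4)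
    by (intro integrableI_eexp) (auto simp: space_restrict_space axis_in_prob_simplex risk_def)
  have "(MIN j\<in>UNIV. risk P Q (axis j 1)) \<in> range (\<lambda>j. risk P Q (axis j 1))"
    by (rule Min_in) auto
  then obtain j0 where j0: "(MIN j\<in>UNIV. risk P Q (axis j 1)) = risk P Q (axis j0 1)"
    by blast
  have F_meas: "(\<lambda>\<omega>. Q (\<omega> n) (mirror_avg \<beta> Q n \<omega>)) \<in> borel_measurable (PiM {1..n} (\<lambda>_. P))"
    using assms(2,7) by (rule measurable_loss_mirror_avg)
  have "risk P Q (axis j0 1) = ereal (\<integral>z. Q z (axis j0 1) \<partial>P)"
    unfolding risk_def by (rule eexp_eq_integral[OF Q_int])
  then show ?thesis
    using order_trans[OF eexp_risk_mirror_avg_le[OF assms(1,7) F_meas]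
        eexp_loss_mirror_avg_le[OF assms(1) Q_int assms(5,7) F_meas, of j0]]
    unfolding j0 plus_ereal.simps(1) by simp
qed

end
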